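(* Let $\mu,\eta,\gamma,\delta>0$ with $\mu>\eta$ and $\Re(p)>0$. Then $$\mathfrak{D}_{z}^{\eta-\mu}\left\{z^{\eta-1}E_{\gamma,\delta}^{\mu}(z);p\right\}=z^{\mu-1}\frac{\Gamma(\eta)}{\Gamma(\mu)}\,E_{1,\gamma,\delta;p}^{(\mu,\eta,\mu)}(z).$$
   Context: For $\Re(\nu)<0$, $\mathfrak{D}_{z}^{\nu}\{f(z);p\}=\frac{1}{\Gamma(-\nu)}\int_0^z f(t)(z-t)^{-\nu-1}\exp\!\left(-\frac{pz^2}{t(z-t)}\right)dt$. $B_p(a,b)=\int_0^1 t^{a-1}(1-t)^{b-1}e^{-\frac{p}{t(1-t)}}dt$ and $B$ is the classical Beta function. $E_{\gamma,\delta}^{\mu}(z)=\sum_{n\ge0}\frac{(\mu)_n}{\Gamma(\gamma n+\delta)}\frac{z^n}{n!}$. The $p$-Mittag-Leffler function is $E_{\lambda,\gamma,\delta;p}^{(\mu,\eta,\omega)}(z)=\sum_{k=0}^\infty\frac{(\mu)_k}{[\Gamma(\gamma k+\delta)]^\lambda}\frac{B_p(\eta+k,\omega-\eta)}{B(\eta,\omega-\eta)}\frac{z^k}{k!}$. *)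

theory Defs
  imports "HOL-Complex_Analysis.Complex_Analysis"
begin

definition Beta_p :: "complex \<Rightarrow> real \<Rightarrow> real \<Rightarrow> complex" where
  "Beta_p p a b = integral {0..1::real}
     (\<lambda>t. complex_of_real (t powr (a - 1) * (1 - t) powr (b - 1))
          * exp (- p / complex_of_real (t * (1 - t))))"

definition ML3 :: "real \<Rightarrow> real \<Rightarrow> real \<Rightarrow> complex \<Rightarrow> complex" where
  "ML3 \<gamma> \<delta> \<mu> z = (\<Sum>n. complex_of_real (pochhammer \<mu> n / Gamma (\<gamma> * real n + \<delta>))
                          * z ^ n / of_nat (fact n))"

definition pML :: "real \<Rightarrow> real \<Rightarrow> real \<Rightarrow> complex \<Rightarrow> real \<Rightarrow> real \<Rightarrow> real \<Rightarrow> complex \<Rightarrow> complex" where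
  "pML lam \<gamma> \<delta> p \<mu> \<eta> \<omega> z = (\<Sum>k.
      complex_of_real (pochhammer \<mu> k / (Gamma (\<gamma> * real k + \<delta>)) powr lam)
      * Beta_p p (\<eta> + real k) (\<omega> - \<eta>) / complex_of_real (Beta \<eta> (\<omega> - \<eta>))
      * z ^ k / of_nat (fact k))"

text \<open>Extended Riemann-Liouville fractional derivative for Re nu < 0, integral along the
  segment from 0 to z (principal branch powers).\<close>
definition frac_D_p :: "complex \<Rightarrow> (complex \<Rightarrow> complex) \<Rightarrow> complex \<Rightarrow> complex \<Rightarrow> complex" where
  "frac_D_p \<nu> f p z = (1 / Gamma (- \<nu>)) *
     contour_integral (linepath 0 z)
       (\<lambda>t. f t * (z - t) powr (- \<nu> - 1) * exp (- p * z ^ 2 / (t * (z - t))))"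

end

theory Submission
  imports Defs
begin

text \<open>Expand the Mittag-Leffler series, substitute \<open>t = s z\<close> on the segment \<open>[0, z]\<close> and
  integrate term by term: the \<open>n\<close>-th term contributes \<open>z\<^sup>n B\<^sub>p(\<eta> + n, \<mu> - \<eta>)\<close>. The interchange
  of sum and integral is dominated convergence, since the kernel of \<open>B\<^sub>p(\<eta> + n, \<mu> - \<eta>)\<close> is
  bounded by that of the classical \<open>B(\<eta>, \<mu> - \<eta>)\<close> when \<open>Re p \<ge> 0\<close>, and the Prabhakar
  coefficients are absolutely summable against every geometric sequence. Finally
  \<open>B(\<eta>, \<mu> - \<eta>) / \<Gamma>(\<mu> - \<eta>) = \<Gamma>(\<eta>) / \<Gamma>(\<mu>)\<close>.\<close>

definition prabhakar_coeff :: "real \<Rightarrow> real \<Rightarrow> real \<Rightarrow> nat \<Rightarrow> real" where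
  "prabhakar_coeff \<gamma> \<delta> \<mu> n = pochhammer \<mu> n / (Gamma (\<gamma> * real n + \<delta>) * fact n)"

definition Beta_p_kernel :: "complex \<Rightarrow> real \<Rightarrow> real \<Rightarrow> real \<Rightarrow> complex" where
  "Beta_p_kernel p a b s = complex_of_real (s powr (a - 1) * (1 - s) powr (b - 1))
     * exp (- p / complex_of_real (s * (1 - s)))"

lemma ML3_eq_suminf_prabhakar_coeff:
  "ML3 \<gamma> \<delta> \<mu> z = (\<Sum>n. complex_of_real (prabhakar_coeff \<gamma> \<delta> \<mu> n) * z ^ n)"
  unfolding ML3_def prabhakar_coeff_def by (simp add: field_simps)

lemma Beta_p_eq_integral_kernel: "Beta_p p a b = integral {0..1} (Beta_p_kernel p a b)"
  unfolding Beta_p_def Beta_p_kernel_def ..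

lemma pML_1_eq_of_sums:
  assumes "\<gamma> \<ge> 0" "\<delta> > 0"
    and "(\<lambda>k. complex_of_real (prabhakar_coeff \<gamma> \<delta> \<mu> k) * z ^ k * Beta_p p (\<eta> + real k) (\<omega> - \<eta>)) sums S"
  shows "pML 1 \<gamma> \<delta> p \<mu> \<eta> \<omega> z = S / complex_of_real (Beta \<eta> (\<omega> - \<eta>))"
proof -
  have "Gamma (\<gamma> * real k + \<delta>) > 0" for k
    using assms(1,2) by (intro Gamma_real_pos add_nonneg_pos) auto
  then have "pML 1 \<gamma> \<delta> p \<mu> \<eta> \<omega> z = (\<Sum>k. complex_of_real (prabhakar_coeff \<gamma> \<delta> \<mu> k) * z ^ k
      * Beta_p p (\<eta> + real k) (\<omega> - \<eta>) / complex_of_real (Beta \<eta> (\<omega> - \<eta>)))"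
    unfolding pML_def prabhakar_coeff_def by (auto simp: abs_of_pos mult_ac intro!: suminf_cong)
  also have "\<dots> = S / complex_of_real (Beta \<eta> (\<omega> - \<eta>))"
    using sums_divide[OF assms(3)] by (simp add: sums_iff)
  finally show ?thesis .
qed

subsection \<open>Absolute convergence of the Prabhakar series\<close>

lemma pochhammer_le_power_fact:
  fixes \<mu> :: real
  assumes "\<mu> > 0"
  shows "pochhammer \<mu> n \<le> max \<mu> 1 ^ n * fact n"
proof (induction n)
  case (Suc n)
  have "\<mu> + real n \<le> max \<mu> 1 * (real n + 1)"
    using mult_le_cancel_right1[of "real n" "max \<mu> 1"] by (simp add: distrib_left)
  then have "pochhammer \<mu> n * (\<mu> + real n) \<le> (max \<mu> 1 ^ n * fact n) * (max \<mu> 1 * (real n + 1))"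
    using Suc assms by (intro mult_mono) (auto simp: pochhammer_nonneg)
  then show ?case by (simp add: pochhammer_Suc algebra_simps)
qed simp

lemma power_le_exp_mult_fact:
  fixes B :: real
  assumes "B \<ge> 0"
  shows "B ^ k \<le> exp B * fact k"
proof -
  have exp_sums: "(\<lambda>n. B ^ n / fact n) sums exp B"
    using exp_converges[of B] by (simp add: divide_inverse mult.commute)
  then have "B ^ k / fact k \<le> exp B"
    using sum_le_suminf[of "\<lambda>n. B ^ n / fact n" "{k}"] assms by (auto simp: sums_iff)
  then show ?thesis by (simp add: field_simps)
qed

lemma Gamma_ge_fact_floor:
  fixes x :: real
  assumes "x \<ge> 2"
  shows "fact (nat \<lfloor>x\<rfloor> - 1) \<le> Gamma x" and "x - 2 \<le> real (nat \<lfloor>x\<rfloor> - 1)"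
proof -
  define k where "k = nat \<lfloor>x\<rfloor>"
  have k: "k \<ge> 2" "real k \<le> x" "x < real k + 1"
    using assms unfolding k_def by linarith+
  have "Gamma (real k) = fact (k - 1)"
    using Gamma_fact[of "k - 1"] k by (simp add: of_nat_diff)
  moreover have "Gamma (real k) \<le> Gamma x"
    using Gamma_real_strict_mono[of "real k" x] k by (cases "real k = x") auto
  ultimately show "fact (nat \<lfloor>x\<rfloor> - 1) \<le> Gamma x"
    unfolding k_def by simp
  show "x - 2 \<le> real (nat \<lfloor>x\<rfloor> - 1)"
    using k unfolding k_def[symmetric] by (simp add: of_nat_diff)
qed

lemma exists_powr_ge:
  fixes y \<gamma> :: real
  assumes "\<gamma> > 0"
  obtains B where "B \<ge> 1" "y \<le> B powr \<gamma>"
proof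
  define B where "B = max 1 (\<bar>y\<bar> powr (1 / \<gamma>))"
  show "B \<ge> 1" unfolding B_def by simp
  have "\<bar>y\<bar> \<le> B powr \<gamma>"
  proof (cases "y = 0")
    case False
    have "\<bar>y\<bar> = (\<bar>y\<bar> powr (1 / \<gamma>)) powr \<gamma>"
      using assms False by (simp add: powr_powr)
    also have "\<dots> \<le> B powr \<gamma>"
      unfolding B_def using assms by (intro powr_mono2) auto
    finally show ?thesis .
  qed (simp add: B_def)
  then show "y \<le> B powr \<gamma>" by simp
qed

text \<open>\<open>\<Gamma>(\<gamma> n + \<delta>)\<close> grows like \<open>(\<lfloor>\<gamma> n\<rfloor>)!\<close>, and \<open>B\<^sup>j \<le> e\<^sup>B j!\<close> turns this into a geometric
  bound with ratio \<open>R / B\<^sup>\<gamma> \<le> 1/2\<close>.\<close>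

lemma summable_power_div_Gamma_affine:
  fixes R \<gamma> \<delta> :: real
  assumes R: "R \<ge> 0" and \<gamma>: "\<gamma> > 0" and \<delta>: "\<delta> > 0"
  shows "summable (\<lambda>n. R ^ n / Gamma (\<gamma> * real n + \<delta>))"
proof -
  obtain B where B: "B \<ge> 1" "2 * R \<le> B powr \<gamma>"
    using exists_powr_ge[OF \<gamma>] by blast
  define q where "q = R / B powr \<gamma>"
  have q: "0 \<le> q" "q \<le> 1 / 2"
    unfolding q_def using R B by (auto simp: field_simps)
  obtain N :: nat where N: "2 \<le> real N * \<gamma>"
    using reals_Archimedean3[OF \<gamma>] by (metis less_le_not_le)
  show ?thesis
  proof (rule summable_comparison_test')
    show "summable (\<lambda>n. exp B * B powr (2 - \<delta>) * q ^ n)"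
      using q by (intro summable_mult summable_geometric) auto
  next
    fix n :: nat
    assume "n \<ge> N"
    define x where "x = \<gamma> * real n + \<delta>"
    have "real N * \<gamma> \<le> real n * \<gamma>"
      using \<open>n \<ge> N\<close> \<gamma> by (intro mult_right_mono) auto
    then have x: "x \<ge> 2"
      unfolding x_def using N \<delta> by (simp add: mult.commute)
    define j where "j = nat \<lfloor>x\<rfloor> - 1"
    have Gamma_x: "fact j \<le> Gamma x" "x - 2 \<le> real j"
      using Gamma_ge_fact_floor[OF x] unfolding j_def by auto
    have "B powr (x - 2) \<le> B powr real j"
      using B Gamma_x by (intro powr_mono) auto
    also have "\<dots> = B ^ j"
      using B by (simp add: powr_realpow)
    also have "\<dots> \<le> exp B * fact j"
      using B by (intro power_le_exp_mult_fact) auto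
    finally have B_fact: "B powr (x - 2) \<le> exp B * fact j" .
    have B_x: "B powr (x - 2) = (B powr \<gamma>) ^ n * B powr (\<delta> - 2)"
      unfolding x_def using B
      by (simp add: powr_add[symmetric] powr_realpow[symmetric] powr_powr algebra_simps)
    have "norm (R ^ n / Gamma x) \<le> R ^ n / fact j"
      using Gamma_x R Gamma_real_pos[of x] x by (auto intro!: divide_left_mono)
    also have "\<dots> \<le> R ^ n * exp B / B powr (x - 2)"
      using B_fact B R mult_left_mono[OF B_fact, of "R ^ n"] by (simp add: field_simps mult_ac)
    also have "\<dots> = exp B * B powr (2 - \<delta>) * q ^ n"
      unfolding q_def B_x using B by (simp add: field_simps power_divide powr_diff powr_minus)
    finally show "norm (R ^ n / Gamma (\<gamma> * real n + \<delta>)) \<le> exp B * B powr (2 - \<delta>) * q ^ n"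
      unfolding x_def .
  qed
qed

lemma summable_norm_prabhakar_series:
  fixes z :: complex
  assumes "\<mu> > 0" "\<gamma> > 0" "\<delta> > 0"
  shows "summable (\<lambda>n. norm (complex_of_real (prabhakar_coeff \<gamma> \<delta> \<mu> n) * z ^ n))"
proof (rule summable_comparison_test')
  show "summable (\<lambda>n. (max \<mu> 1 * norm z) ^ n / Gamma (\<gamma> * real n + \<delta>))"
    using assms by (intro summable_power_div_Gamma_affine) auto
next
  fix n :: nat
  have Gamma_pos: "Gamma (\<gamma> * real n + \<delta>) > 0"
    using assms by (intro Gamma_real_pos add_nonneg_pos) auto
  have "prabhakar_coeff \<gamma> \<delta> \<mu> n \<ge> 0"
    unfolding prabhakar_coeff_def using assms(1) Gamma_pos by (simp add: pochhammer_nonneg)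
  then have "norm (norm (complex_of_real (prabhakar_coeff \<gamma> \<delta> \<mu> n) * z ^ n))
      = prabhakar_coeff \<gamma> \<delta> \<mu> n * norm z ^ n"
    by (simp add: norm_mult norm_power)
  also have "\<dots> = pochhammer \<mu> n / fact n * norm z ^ n / Gamma (\<gamma> * real n + \<delta>)"
    unfolding prabhakar_coeff_def by simp
  also have "\<dots> \<le> max \<mu> 1 ^ n * norm z ^ n / Gamma (\<gamma> * real n + \<delta>)"
    using pochhammer_le_power_fact[OF assms(1), of n] Gamma_pos
    by (intro divide_right_mono mult_right_mono) (auto simp: field_simps)
  finally show "norm (norm (complex_of_real (prabhakar_coeff \<gamma> \<delta> \<mu> n) * z ^ n))
      \<le> (max \<mu> 1 * norm z) ^ n / Gamma (\<gamma> * real n + \<delta>)"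
    by (simp add: power_mult_distrib)
qed

subsection \<open>Term-by-term integration of the extended Beta kernel\<close>

lemma norm_Beta_p_kernel_le:
  assumes "Re p \<ge> 0" "s \<in> {0..1}" "a \<le> a'"
  shows "norm (Beta_p_kernel p a' b s) \<le> s powr (a - 1) * (1 - s) powr (b - 1)"
proof -
  have "Re (- p / complex_of_real (s * (1 - s))) = - Re p / (s * (1 - s))"
    by (simp add: Re_divide_of_real)
  also have "\<dots> \<le> 0"
    using assms by (simp add: divide_nonneg_nonneg)
  finally have exp_le: "norm (exp (- p / complex_of_real (s * (1 - s)))) \<le> 1"
    by simp
  have "s powr (a' - 1) \<le> s powr (a - 1)"
    using assms by (cases "s = 0") (auto intro: powr_mono')
  then have "norm (Beta_p_kernel p a' b s)
      \<le> s powr (a - 1) * (1 - s) powr (b - 1) * norm (exp (- p / complex_of_real (s * (1 - s))))"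
    unfolding Beta_p_kernel_def using assms(2) by (simp add: norm_mult mult_right_mono)
  also have "\<dots> \<le> s powr (a - 1) * (1 - s) powr (b - 1)"
    using exp_le assms(2) by (intro mult_left_le) auto
  finally show ?thesis .
qed

lemma set_integrable_Beta_p_kernel:
  assumes "Re p \<ge> 0" "a > 0" "b > 0" "a \<le> a'"
  shows "set_integrable lborel {0..1} (Beta_p_kernel p a' b)"
  unfolding set_integrable_def
proof (rule Bochner_Integration.integrable_bound[OF _ _ AE_I2])
  show "integrable lborel (\<lambda>s. indicator {0..1} s *\<^sub>R (s powr (a - 1) * (1 - s) powr (b - 1)))"
    using integrable_Beta[OF assms(2,3)] unfolding set_integrable_def .
  show "(\<lambda>s. indicator {0..1} s *\<^sub>R Beta_p_kernel p a' b s) \<in> borel_measurable lborel"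
    unfolding Beta_p_kernel_def by measurable
  show "norm (indicator {0..1} s *\<^sub>R Beta_p_kernel p a' b s)
      \<le> norm (indicator {0..1} s *\<^sub>R (s powr (a - 1) * (1 - s) powr (b - 1)))" for s
    using norm_Beta_p_kernel_le[OF assms(1) _ assms(4), of s b] by (auto simp: indicator_def)
qed

lemma sums_Beta_p_shifted:
  fixes d :: "nat \<Rightarrow> complex"
  assumes p: "Re p \<ge> 0" and ab: "a > 0" "b > 0" and d: "summable (\<lambda>n. norm (d n))"
  shows "(\<lambda>n. d n * Beta_p p (a + real n) b)
           sums integral {0..1} (\<lambda>s. \<Sum>n. d n * Beta_p_kernel p (a + real n) b s)"
proof -
  define F where "F n s = d n * Beta_p_kernel p (a + real n) b s" for n s
  define f where "f n s = indicator {0..1::real} s *\<^sub>R F n s" for n s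
  define w where "w s = indicator {0..1} s *\<^sub>R (s powr (a - 1) * (1 - s) powr (b - 1))" for s :: real
  have F_integrable: "set_integrable lborel {0..1} (F n)" for n
    unfolding F_def using set_integrable_Beta_p_kernel[OF p ab] by (intro set_integrable_mult_right) auto
  then have f_integrable: "integrable lborel (f n)" for n
    unfolding f_def set_integrable_def .
  have w_integrable: "integrable lborel w"
    using integrable_Beta[OF ab] unfolding w_def set_integrable_def .
  have w_integral: "(\<integral>s. w s \<partial>lborel) = Beta a b"
    using set_borel_integral_eq_integral(2)[OF integrable_Beta[OF ab]]
      integral_unique[OF has_integral_Beta_real[OF ab]]
    unfolding w_def set_lebesgue_integral_def by simp
  have f_le: "norm (f n s) \<le> norm (d n) * w s" for n s
    using norm_Beta_p_kernel_le[OF p, of s a "a + real n" b]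
    unfolding f_def F_def w_def by (auto simp: indicator_def norm_mult intro: mult_left_mono)
  have "AE s in lborel. summable (\<lambda>n. norm (f n s))"
    using f_le by (intro AE_I2 summable_comparison_test[OF _ summable_mult2[OF d]]) auto
  moreover have "summable (\<lambda>n. \<integral>s. norm (f n s) \<partial>lborel)"
  proof (rule summable_comparison_test[OF _ summable_mult2[OF d, of "Beta a b"]])
    have "(\<integral>s. norm (f n s) \<partial>lborel) \<le> (\<integral>s. norm (d n) * w s \<partial>lborel)" for n
      by (intro integral_mono integrable_norm f_integrable integrable_mult_right w_integrable f_le)
    then show "\<exists>N. \<forall>n\<ge>N. norm (\<integral>s. norm (f n s) \<partial>lborel) \<le> norm (d n) * Beta a b"
      using w_integral by simp
  qed
  ultimately have "(\<lambda>n. \<integral>s. f n s \<partial>lborel) sums (\<integral>s. (\<Sum>n. f n s) \<partial>lborel)"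
    and "integrable lborel (\<lambda>s. \<Sum>n. f n s)"
    using sums_integral integrable_suminf f_integrable by blast+
  moreover have sum_f: "(\<lambda>s. \<Sum>n. f n s) = (\<lambda>s. indicator {0..1} s *\<^sub>R (\<Sum>n. F n s))"
    unfolding f_def by (auto simp: indicator_def)
  ultimately have "(\<lambda>n. set_lebesgue_integral lborel {0..1} (F n))
      sums set_lebesgue_integral lborel {0..1} (\<lambda>s. \<Sum>n. F n s)"
    and sum_integrable: "set_integrable lborel {0..1} (\<lambda>s. \<Sum>n. F n s)"
    unfolding set_lebesgue_integral_def set_integrable_def f_def[symmetric] sum_f[symmetric]
    by simp_all
  then have "(\<lambda>n. integral {0..1} (F n)) sums integral {0..1} (\<lambda>s. \<Sum>n. F n s)"
    using set_borel_integral_eq_integral(2)[OF F_integrable]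
      set_borel_integral_eq_integral(2)[OF sum_integrable]
    by simp
  then show ?thesis
    unfolding F_def Beta_p_eq_integral_kernel by simp
qed

lemma powr_of_real_mult:
  fixes z :: complex and s a :: real
  assumes "s > 0" "z \<noteq> 0"
  shows "(complex_of_real s * z) powr complex_of_real a = complex_of_real (s powr a) * z powr complex_of_real a"
proof -
  have "Ln (complex_of_real s * z) = complex_of_real (ln s) + Ln z"
    using assms by (simp add: Ln_times_of_real Ln_of_real)
  then show ?thesis
    using assms by (simp add: powr_def distrib_left exp_add exp_of_real[symmetric] mult.commute)
qed

lemma frac_D_p_integrand_on_segment:
  fixes \<mu> \<eta> \<gamma> \<delta> s :: real and p z :: complex
  assumes "\<mu> > 0" "\<gamma> > 0" "\<delta> > 0" and s: "0 < s" "s < 1" and z: "z \<noteq> 0"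
  defines "t \<equiv> complex_of_real s * z"
  shows "t powr complex_of_real (\<eta> - 1) * ML3 \<gamma> \<delta> \<mu> t * (z - t) powr (- complex_of_real (\<eta> - \<mu>) - 1)
           * exp (- p * z ^ 2 / (t * (z - t))) * z
       = z powr complex_of_real (\<mu> - 1)
           * (\<Sum>n. complex_of_real (prabhakar_coeff \<gamma> \<delta> \<mu> n) * z ^ n
                  * Beta_p_kernel p (\<eta> + real n) (\<mu> - \<eta>) s)"
proof -
  define c where "c n = complex_of_real (prabhakar_coeff \<gamma> \<delta> \<mu> n) * z ^ n" for n
  define W where "W = Beta_p_kernel p \<eta> (\<mu> - \<eta>) s"
  have z_minus_t: "z - t = complex_of_real (1 - s) * z"
    unfolding t_def by (simp add: algebra_simps)
  have t_powr: "t powr complex_of_real (\<eta> - 1) = complex_of_real (s powr (\<eta> - 1)) * z powr complex_of_real (\<eta> - 1)"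
    unfolding t_def using s z by (intro powr_of_real_mult) auto
  have "(z - t) powr (- complex_of_real (\<eta> - \<mu>) - 1) = (z - t) powr complex_of_real (\<mu> - \<eta> - 1)"
    by simp
  also have "\<dots> = complex_of_real ((1 - s) powr (\<mu> - \<eta> - 1)) * z powr complex_of_real (\<mu> - \<eta> - 1)"
    unfolding z_minus_t using s z by (intro powr_of_real_mult) auto
  finally have z_minus_t_powr: "(z - t) powr (- complex_of_real (\<eta> - \<mu>) - 1) = \<dots>" .
  have exp_arg: "- p * z ^ 2 / (t * (z - t)) = - p / complex_of_real (s * (1 - s))"
    unfolding z_minus_t t_def using s z by (simp add: field_simps power2_eq_square)
  have z_powr: "z powr complex_of_real (\<eta> - 1) * z powr complex_of_real (\<mu> - \<eta> - 1) * z
      = z powr complex_of_real (\<mu> - 1)"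
  proof -
    have "z powr complex_of_real (\<mu> - 1)
        = z powr (complex_of_real (\<eta> - 1) + complex_of_real (\<mu> - \<eta> - 1) + 1)"
      by simp
    then show ?thesis
      by (simp only: powr_add powr_to_1)
  qed
  have ML3_t: "ML3 \<gamma> \<delta> \<mu> t = (\<Sum>n. c n * complex_of_real (s ^ n))"
    unfolding ML3_eq_suminf_prabhakar_coeff c_def t_def by (simp add: power_mult_distrib mult_ac)
  have "summable (\<lambda>n. c n * complex_of_real (s ^ n))"
    using summable_norm_cancel[OF summable_norm_prabhakar_series[OF assms(1-3), of t]]
    unfolding c_def t_def by (simp add: power_mult_distrib mult_ac)
  then have "(\<Sum>n. c n * complex_of_real (s ^ n)) * W = (\<Sum>n. c n * complex_of_real (s ^ n) * W)"
    by (rule suminf_mult2)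
  also have "\<dots> = (\<Sum>n. c n * Beta_p_kernel p (\<eta> + real n) (\<mu> - \<eta>) s)"
  proof -
    have "s powr (\<eta> + real n - 1) = s ^ n * s powr (\<eta> - 1)" for n
      using s by (simp add: powr_add[symmetric] powr_realpow[symmetric] algebra_simps)
    then show ?thesis
      by (simp add: W_def Beta_p_kernel_def mult_ac)
  qed
  finally have series: "(\<Sum>n. c n * complex_of_real (s ^ n)) * W = \<dots>" .
  show ?thesis
    unfolding t_powr z_minus_t_powr exp_arg ML3_t z_powr[symmetric] series[symmetric] c_def[symmetric]
    by (simp add: W_def Beta_p_kernel_def mult_ac)
qed

lemma contour_integral_frac_D_p_integrand:
  fixes \<mu> \<eta> \<gamma> \<delta> :: real and p z :: complex
  assumes "\<mu> > 0" "\<gamma> > 0" "\<delta> > 0" "z \<noteq> 0"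
  shows "contour_integral (linepath 0 z) (\<lambda>t. t powr complex_of_real (\<eta> - 1) * ML3 \<gamma> \<delta> \<mu> t
           * (z - t) powr (- complex_of_real (\<eta> - \<mu>) - 1) * exp (- p * z ^ 2 / (t * (z - t))))
       = z powr complex_of_real (\<mu> - 1) * integral {0..1} (\<lambda>s. \<Sum>n.
           complex_of_real (prabhakar_coeff \<gamma> \<delta> \<mu> n) * z ^ n * Beta_p_kernel p (\<eta> + real n) (\<mu> - \<eta>) s)"
proof -
  have "contour_integral (linepath 0 z) (\<lambda>t. t powr complex_of_real (\<eta> - 1) * ML3 \<gamma> \<delta> \<mu> t
          * (z - t) powr (- complex_of_real (\<eta> - \<mu>) - 1) * exp (- p * z ^ 2 / (t * (z - t))))
      = integral {0..1} (\<lambda>s. z powr complex_of_real (\<mu> - 1) * (\<Sum>n.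
          complex_of_real (prabhakar_coeff \<gamma> \<delta> \<mu> n) * z ^ n * Beta_p_kernel p (\<eta> + real n) (\<mu> - \<eta>) s))"
    unfolding contour_integral_integral
  proof (rule integral_spike[of "{0, 1}"])
    fix s :: real
    assume "s \<in> {0..1} - {0, 1}"
    then have "0 < s" "s < 1" by auto
    then show "z powr complex_of_real (\<mu> - 1) * (\<Sum>n.
          complex_of_real (prabhakar_coeff \<gamma> \<delta> \<mu> n) * z ^ n * Beta_p_kernel p (\<eta> + real n) (\<mu> - \<eta>) s)
        = (\<lambda>t. t powr complex_of_real (\<eta> - 1) * ML3 \<gamma> \<delta> \<mu> t
             * (z - t) powr (- complex_of_real (\<eta> - \<mu>) - 1) * exp (- p * z ^ 2 / (t * (z - t))))
            (linepath 0 z s) * vector_derivative (linepath 0 z) (at s)"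
      using frac_D_p_integrand_on_segment[OF assms(1-3) _ _ assms(4), of s]
      by (simp add: linepath_def scaleR_conv_of_real)
  qed simp
  then show ?thesis by simp
qed

theorem mainTheorem13:
  fixes \<mu> \<eta> \<gamma> \<delta> :: real and p z :: complex
  assumes "\<mu> > 0" "\<eta> > 0" "\<gamma> > 0" "\<delta> > 0" "\<mu> > \<eta>" "Re p > 0"
  shows "frac_D_p (complex_of_real (\<eta> - \<mu>))
           (\<lambda>t. t powr complex_of_real (\<eta> - 1) * ML3 \<gamma> \<delta> \<mu> t) p z
         = z powr complex_of_real (\<mu> - 1) * complex_of_real (Gamma \<eta> / Gamma \<mu>)
           * pML 1 \<gamma> \<delta> p \<mu> \<eta> \<mu> z"
proof (cases "z = 0")
  case True
  then show ?thesis
    by (simp add: frac_D_p_def contour_integral_unique)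
next
  case False
  define S where "S = integral {0..1} (\<lambda>s. \<Sum>n.
    complex_of_real (prabhakar_coeff \<gamma> \<delta> \<mu> n) * z ^ n * Beta_p_kernel p (\<eta> + real n) (\<mu> - \<eta>) s)"
  have "(\<lambda>n. complex_of_real (prabhakar_coeff \<gamma> \<delta> \<mu> n) * z ^ n * Beta_p p (\<eta> + real n) (\<mu> - \<eta>)) sums S"
    unfolding S_def using assms by (intro sums_Beta_p_shifted summable_norm_prabhakar_series) auto
  then have pML_eq: "pML 1 \<gamma> \<delta> p \<mu> \<eta> \<mu> z = S / complex_of_real (Beta \<eta> (\<mu> - \<eta>))"
    using assms by (intro pML_1_eq_of_sums) auto
  have "frac_D_p (complex_of_real (\<eta> - \<mu>)) (\<lambda>t. t powr complex_of_real (\<eta> - 1) * ML3 \<gamma> \<delta> \<mu> t) p z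
      = z powr complex_of_real (\<mu> - 1) * S / complex_of_real (Gamma (\<mu> - \<eta>))"
    unfolding frac_D_p_def contour_integral_frac_D_p_integrand[OF assms(1,3,4) False] S_def
    by (simp add: Gamma_complex_of_real[symmetric])
  moreover have "Gamma \<eta> > 0" "Gamma \<mu> > 0" "Gamma (\<mu> - \<eta>) > 0"
    using assms by (auto intro!: Gamma_real_pos)
  ultimately show ?thesis
    unfolding pML_eq by (simp add: Beta_def field_simps)
qed

end
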